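(* Let $\Phi=(A;\{E_i\}_{i=0}^d;A^*;\{E^*_i\}_{i=0}^d)$ be a tridiagonal system on $V$ with $d\ge1$, such that $(A,A^* )$ satisfies the $q$-Serre relations, with $E_iV$ the eigenspace of $A$ for $\theta_i=q^{2i-d}$ and $E^*_iV$ the eigenspace of $A^*$ for $\theta^*_i=q^{d-2i}$. Let $\{U_i\}_{i=0}^d$ be its split decomposition, $K:V\to V$ the linear map acting on $U_i$ as $q^{d-2i}I$, $t$ a scalar, $B^*=tA^*+(1-t)K$, and let $E'_0$ be the primitive idempotent of $B^*$ for the eigenvalue $\theta^*_0$. Then $U_0=E'_0V$.
   Context: $\mathcal K$ is an algebraically closed field; $V$ is a nonzero finite-dimensional vector space over $\mathcal K$; $q\in\mathcal K$ is nonzero and not a root of unity; $[3]_q=q^2+1+q^{-2}$. The $q$-Serre relations for $(X,Y)$: $X^3Y-[3]_qX^2YX+[3]_qXYX^2-YX^3=0$ and $Y^3X-[3]_qY^2XY+[3]_qYXY^2-XY^3=0$. Primitive idempotent of a diagonalizable $X$ for eigenvalue $\lambda_i$: $\prod_{j\ne i}\frac{X-\lambda_jI}{\lambda_i-\lambda_j}$. A tridiagonal system on $V$ is a sequence $(A;\{E_i\}_{i=0}^d;A^*;\{E^*_i\}_{i=0}^d)$ with $A,A^*$ diagonalizable, $\{E_i\}$, $\{E^*_i\}$ orderings of their primitive idempotents, $E_iA^*E_j=0$ and $E^*_iAE^*_j=0$ when $|i-j|>1$, and no subspaces other than $0,V$ invariant under both $A$ and $A^*$. Split decomposition: $U_i=(E^*_0V+\cdots+E^*_iV)\cap(E_iV+\cdots+E_dV)$;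 known: $V=U_0\oplus\cdots\oplus U_d$, $(A-\theta_iI)U_i\subseteq U_{i+1}$, $(A^*-\theta^*_iI)U_i\subseteq U_{i-1}$ ($U_{-1}=U_{d+1}=0$). It is a fact (proved in the paper) that $B^*$ is diagonalizable with eigenvalues $\theta^*_0,\dots,\theta^*_d$ and $\theta^*_i$-eigenspace of dimension $\dim U_i$. *)

theory Defs
  imports "HOL-Computational_Algebra.Polynomial" "Jordan_Normal_Form.Char_Poly"
begin

text \<open>V is modelled as the column space carrier_vec n (n = dim V), linear maps on V as
  n x n matrices over the field.\<close>

definition diagonalizable_mat :: "'a::field mat \<Rightarrow> bool" where
  "diagonalizable_mat X \<longleftrightarrow> (\<exists>D. similar_mat X D \<and> diagonal_mat D)"

definition subspace_vec :: "nat \<Rightarrow> 'a::field vec set \<Rightarrow> bool" where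
  "subspace_vec n W \<longleftrightarrow> W \<subseteq> carrier_vec n \<and> 0\<^sub>v n \<in> W \<and>
     (\<forall>u\<in>W. \<forall>w\<in>W. u + w \<in> W) \<and> (\<forall>c. \<forall>w\<in>W. c \<cdot>\<^sub>v w \<in> W)"

definition image_mat :: "'a::field mat \<Rightarrow> 'a vec set" where
  "image_mat X = {X *\<^sub>v v | v. v \<in> carrier_vec (dim_col X)}"

fun ssum :: "nat \<Rightarrow> 'a::field vec set list \<Rightarrow> 'a vec set" where
  "ssum n [] = {0\<^sub>v n}"
| "ssum n (W # Ws) = {w + u | w u. w \<in> W \<and> u \<in> ssum n Ws}"

definition mat_prod_list :: "nat \<Rightarrow> 'a::field mat list \<Rightarrow> 'a mat" where
  "mat_prod_list n Ms = foldr (*) Ms (1\<^sub>m n)"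

definition eigenvalues_of :: "'a::field mat \<Rightarrow> 'a set" where
  "eigenvalues_of X = {\<mu>. eigenvalue X \<mu>}"

text \<open>The factors commute, so the (arbitrary) order of the list is irrelevant.\<close>
definition prim_idem :: "'a::field mat \<Rightarrow> 'a \<Rightarrow> 'a mat" where
  "prim_idem X lam =
     (let ms = (SOME ms. distinct ms \<and> set ms = eigenvalues_of X - {lam})
      in mat_prod_list (dim_row X)
           (map (\<lambda>\<mu>. (1 / (lam - \<mu>)) \<cdot>\<^sub>m (X - \<mu> \<cdot>\<^sub>m 1\<^sub>m (dim_row X))) ms))"

definition q_int :: "'a::field \<Rightarrow> 'a" where
  "q_int q = q^2 + 1 + inverse q ^ 2"

definition q_serre :: "'a::field \<Rightarrow> 'a mat \<Rightarrow> 'a mat \<Rightarrow> bool" where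
  "q_serre q X Y \<longleftrightarrow>
     X*X*X*Y - q_int q \<cdot>\<^sub>m (X*X*Y*X) + q_int q \<cdot>\<^sub>m (X*Y*X*X) - Y*X*X*X = 0\<^sub>m (dim_row X) (dim_row X) \<and>
     Y*Y*Y*X - q_int q \<cdot>\<^sub>m (Y*Y*X*Y) + q_int q \<cdot>\<^sub>m (Y*X*Y*Y) - X*Y*Y*Y = 0\<^sub>m (dim_row X) (dim_row X)"

text \<open>Tridiagonal system (A; E_i; A*; E*_i) on K^n, where E_i is the primitive idempotent of A
  for th i and E*_i that of A* for ths i (i = 0..d).\<close>
definition tridiagonal_system ::
  "nat \<Rightarrow> nat \<Rightarrow> 'a::field mat \<Rightarrow> (nat \<Rightarrow> 'a) \<Rightarrow> 'a mat \<Rightarrow> (nat \<Rightarrow> 'a) \<Rightarrow> bool" where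
  "tridiagonal_system n d A th As ths \<longleftrightarrow>
     A \<in> carrier_mat n n \<and> As \<in> carrier_mat n n \<and>
     diagonalizable_mat A \<and> diagonalizable_mat As \<and>
     inj_on th {0..d} \<and> inj_on ths {0..d} \<and>
     eigenvalues_of A = th ` {0..d} \<and> eigenvalues_of As = ths ` {0..d} \<and>
     (\<forall>i\<le>d. \<forall>j\<le>d. (i > j + 1 \<or> j > i + 1) \<longrightarrow>
        prim_idem A (th i) * As * prim_idem A (th j) = 0\<^sub>m n n \<and>
        prim_idem As (ths i) * A * prim_idem As (ths j) = 0\<^sub>m n n) \<and>
     (\<forall>W. subspace_vec n W \<and> (\<forall>w\<in>W. A *\<^sub>v w \<in> W) \<and> (\<forall>w\<in>W. As *\<^sub>v w \<in> W)
          \<longrightarrow> W = {0\<^sub>v n} \<or> W = carrier_vec n)"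

definition split_comp ::
  "nat \<Rightarrow> nat \<Rightarrow> 'a::field mat \<Rightarrow> (nat \<Rightarrow> 'a) \<Rightarrow> 'a mat \<Rightarrow> (nat \<Rightarrow> 'a) \<Rightarrow> nat \<Rightarrow> 'a vec set" where
  "split_comp n d A th As ths i =
     ssum n (map (\<lambda>k. image_mat (prim_idem As (ths k))) [0..<i+1]) \<inter>
     ssum n (map (\<lambda>k. image_mat (prim_idem A (th k))) [i..<d+1])"

end

(*
  Let F k = E*_0 V + ... + E*_(k-1) V. Tridiagonality and irreducibility of the pair A, A* give the
  split decomposition in the form F (k + 1) = U_k + F k, where
  U_k = F (k + 1) \<inter> (E_k V + ... + E_d V):
  both F k \<inter> (E_k V + ... + E_d V) = 0 and V = U_0 + ... + U_d follow because suitable sums of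
  intersections are invariant under A and A*.  Since K acts on U_k as th*_k and
  (A* - th*_k) F (k + 1) \<subseteq> F k, also (B* - th*_k) F (k + 1) \<subseteq> F k: B* is triangular with respect
  to the flag 0 = F 0 \<subseteq> ... \<subseteq> F (d + 1) = V with the distinct diagonal entries th*_0, ..., th*_d.
  Such an operator is diagonalizable, so the image of its primitive idempotent E'_0 is its
  th*_0-eigenspace, and that eigenspace is F 1 = E*_0 V = U_0.  Only the distinctness of the
  th*_i enters.
*)
theory Submission
  imports Defs
begin

lemma smult_mat_mult_vec:
  assumes "M \<in> carrier_mat nr nc" "v \<in> carrier_vec nc"
  shows "(c \<cdot>\<^sub>m M) *\<^sub>v v = c \<cdot>\<^sub>v (M *\<^sub>v v)"
  using assms by (intro eq_vecI) (auto simp: scalar_prod_def sum_distrib_left mult.assoc)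

lemma mult_mat_vec_zero: "M \<in> carrier_mat nr n \<Longrightarrow> M *\<^sub>v 0\<^sub>v n = 0\<^sub>v nr"
  by (intro eq_vecI) auto

lemma mult_mat_vec_unit_vec:
  assumes "(P :: 'a::semiring_1 mat) \<in> carrier_mat nr n" "m < n"
  shows "P *\<^sub>v unit_vec n m = col P m"
proof (intro eq_vecI)
  fix i assume "i < dim_vec (col P m)"
  then have "i < nr" using assms by simp
  moreover have "(\<Sum>j = 0..<n. P $$ (i, j) * (if j = m then 1 else 0))
      = (\<Sum>j = 0..<n. if j = m then P $$ (i, m) else 0)"
    by (rule sum.cong) auto
  ultimately show "(P *\<^sub>v unit_vec n m) $ i = col P m $ i"
    using assms by (simp add: scalar_prod_def unit_vec_def)
qed (use assms in simp)

lemma minus_vec_eq_zero_iff: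
  assumes "(u :: 'a::ab_group_add vec) \<in> carrier_vec n" "w \<in> carrier_vec n"
  shows "u - w = 0\<^sub>v n \<longleftrightarrow> u = w"
proof
  assume eq: "u - w = 0\<^sub>v n"
  show "u = w"
  proof (intro eq_vecI)
    fix i assume "i < dim_vec w"
    moreover have "(u - w) $ i = 0\<^sub>v n $ i" using eq by simp
    ultimately show "u $ i = w $ i" using assms by simp
  qed (use assms in simp)
qed (use assms in \<open>auto intro!: eq_vecI\<close>)

lemma char_matrix_mult_vec:
  assumes "X \<in> carrier_mat n n" "v \<in> carrier_vec n"
  shows "char_matrix X c *\<^sub>v v = X *\<^sub>v v - c \<cdot>\<^sub>v v"
proof -
  have "char_matrix X c *\<^sub>v v = X *\<^sub>v v + (-c) \<cdot>\<^sub>v v"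
    using assms unfolding char_matrix_def
    by (simp add: add_mult_distrib_mat_vec[of _ n n] smult_mat_mult_vec[of _ n n])
  then show ?thesis using assms by (auto intro!: eq_vecI)
qed

lemma char_matrix_combination:
  assumes "X \<in> carrier_mat n n" "K \<in> carrier_mat n n" "u \<in> carrier_vec n" "K *\<^sub>v u = c \<cdot>\<^sub>v u"
  shows "char_matrix (t \<cdot>\<^sub>m X + (1 - t) \<cdot>\<^sub>m K) c *\<^sub>v u = t \<cdot>\<^sub>v (char_matrix X c *\<^sub>v u)"
proof -
  have M: "t \<cdot>\<^sub>m X + (1 - t) \<cdot>\<^sub>m K \<in> carrier_mat n n" using assms by simp
  have "(t \<cdot>\<^sub>m X + (1 - t) \<cdot>\<^sub>m K) *\<^sub>v u = t \<cdot>\<^sub>v (X *\<^sub>v u) + (1 - t) \<cdot>\<^sub>v (c \<cdot>\<^sub>v u)"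
    using assms by (simp add: add_mult_distrib_mat_vec[of _ n n] smult_mat_mult_vec[of _ n n])
  then show ?thesis
    using assms
      by (auto intro!: eq_vecI simp: char_matrix_mult_vec[OF M] char_matrix_mult_vec[OF assms(1)]
        algebra_simps)
qed

subsection \<open>Subspaces and their sums\<close>

lemma subspace_vec_carrier: "subspace_vec n W \<Longrightarrow> W \<subseteq> carrier_vec n"
  and subspace_vec_zero: "subspace_vec n W \<Longrightarrow> 0\<^sub>v n \<in> W"
  and subspace_vec_add: "subspace_vec n W \<Longrightarrow> u \<in> W \<Longrightarrow> w \<in> W \<Longrightarrow> u + w \<in> W"
  and subspace_vec_smult: "subspace_vec n W \<Longrightarrow> w \<in> W \<Longrightarrow> c \<cdot>\<^sub>v w \<in> W"
  by (auto simp: subspace_vec_def)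

lemma subspace_vec_minus:
  assumes W: "subspace_vec n W" and "u \<in> W" "w \<in> W"
  shows "u - w \<in> W"
proof -
  have "u - w = u + (-1) \<cdot>\<^sub>v w"
    using assms subspace_vec_carrier[OF W] by (intro eq_vecI) auto
  then show ?thesis using assms by (simp add: subspace_vec_add subspace_vec_smult)
qed

lemma subspace_vec_Int: "subspace_vec n W \<Longrightarrow> subspace_vec n Z \<Longrightarrow> subspace_vec n (W \<inter> Z)"
  by (auto simp: subspace_vec_def)

lemma subspace_vec_zero_space: "subspace_vec n {0\<^sub>v n}"
  by (auto simp: subspace_vec_def)

lemma subspace_vec_preimage:
  assumes "M \<in> carrier_mat n n" "subspace_vec n Z"
  shows "subspace_vec n {v \<in> carrier_vec n. M *\<^sub>v v \<in> Z}"
  using assms mult_mat_vec_zero[OF assms(1)]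
  by (auto simp: subspace_vec_def mult_add_distrib_mat_vec[OF assms(1)] mult_mat_vec[OF assms(1)])

lemma mult_mat_vec_in_subspace:
  assumes P: "P \<in> carrier_mat n n" and Z: "subspace_vec n Z"
    and cols: "\<And>m. m < n \<Longrightarrow> col P m \<in> Z" and v: "v \<in> carrier_vec n"
  shows "P *\<^sub>v v \<in> Z"
proof -
  have "P *\<^sub>v vec n (\<lambda>i. if i < m then v $ i else 0) \<in> Z" if "m \<le> n" for m
    using that
  proof (induction m)
    case 0
    have "P *\<^sub>v vec n (\<lambda>i. if i < 0 then v $ i else 0) = 0\<^sub>v n"
      using P by (intro eq_vecI) (auto simp: scalar_prod_def)
    then show ?case using subspace_vec_zero[OF Z] by simp
  next
    case (Suc m)
    have "vec n (\<lambda>i. if i < Suc m then v $ i else 0)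
        = vec n (\<lambda>i. if i < m then v $ i else 0) + v $ m \<cdot>\<^sub>v unit_vec n m"
      using Suc.prems by (intro eq_vecI) (auto simp: unit_vec_def less_Suc_eq)
    moreover have "P *\<^sub>v unit_vec n m = col P m"
      using P Suc.prems by (simp add: mult_mat_vec_unit_vec)
    ultimately have "P *\<^sub>v vec n (\<lambda>i. if i < Suc m then v $ i else 0)
        = P *\<^sub>v vec n (\<lambda>i. if i < m then v $ i else 0) + v $ m \<cdot>\<^sub>v col P m"
      using P by (simp add: mult_add_distrib_mat_vec mult_mat_vec)
    then show ?case
      using Suc cols by (simp add: subspace_vec_add[OF Z] subspace_vec_smult[OF Z])
  qed
  moreover have "vec n (\<lambda>i. if i < n then v $ i else 0) = v"
    using v by (intro eq_vecI) auto
  ultimately show ?thesis by (metis order_refl)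
qed

lemma ssum_carrier: "(\<And>W. W \<in> set Ws \<Longrightarrow> W \<subseteq> carrier_vec n) \<Longrightarrow> ssum n Ws \<subseteq> carrier_vec n"
proof (induction Ws)
  case (Cons W Ws)
  then show ?case by (auto intro!: add_carrier_vec)
qed simp

lemma subspace_vec_ssum:
  "(\<And>W. W \<in> set Ws \<Longrightarrow> subspace_vec n W) \<Longrightarrow> subspace_vec n (ssum n Ws)"
proof (induction Ws)
  case Nil
  then show ?case by (simp add: subspace_vec_zero_space)
next
  case (Cons W Ws)
  have W: "subspace_vec n W" and S: "subspace_vec n (ssum n Ws)" using Cons by auto
  have car: "W \<subseteq> carrier_vec n" "ssum n Ws \<subseteq> carrier_vec n"
    using W S by (auto dest: subspace_vec_carrier)
  have add: "(w + u) + (w' + u') = (w + w') + (u + u')"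
    if "w \<in> W" "w' \<in> W" "u \<in> ssum n Ws" "u' \<in> ssum n Ws" for w w' u u'
  proof -
    have "w \<in> carrier_vec n" "w' \<in> carrier_vec n" "u \<in> carrier_vec n" "u' \<in> carrier_vec n"
      using that car by auto
    then show ?thesis by (intro eq_vecI) auto
  qed
  have smult: "c \<cdot>\<^sub>v (w + u) = c \<cdot>\<^sub>v w + c \<cdot>\<^sub>v u" if "w \<in> W" "u \<in> ssum n Ws" for c w u
    using that car by (intro smult_add_distrib_vec) auto
  show ?case
    unfolding subspace_vec_def ssum.simps
  proof (intro conjI ballI allI)
    show "{w + u |w u. w \<in> W \<and> u \<in> ssum n Ws} \<subseteq> carrier_vec n"
      using car by (blast intro: add_carrier_vec)
    show "0\<^sub>v n \<in> {w + u |w u. w \<in> W \<and> u \<in> ssum n Ws}"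
      using subspace_vec_zero[OF W] subspace_vec_zero[OF S] by force
  next
    fix x y
    assume "x \<in> {w + u |w u. w \<in> W \<and> u \<in> ssum n Ws}" "y \<in> {w + u |w u. w \<in> W \<and> u \<in> ssum n Ws}"
    then show "x + y \<in> {w + u |w u. w \<in> W \<and> u \<in> ssum n Ws}"
      using add subspace_vec_add[OF W] subspace_vec_add[OF S] by blast
  next
    fix c x assume "x \<in> {w + u |w u. w \<in> W \<and> u \<in> ssum n Ws}"
    then show "c \<cdot>\<^sub>v x \<in> {w + u |w u. w \<in> W \<and> u \<in> ssum n Ws}"
      using smult subspace_vec_smult[OF W] subspace_vec_smult[OF S] by blast
  qed
qed

lemma ssum_upper:
  assumes "\<And>W. W \<in> set Ws \<Longrightarrow> subspace_vec n W" and "W \<in> set Ws"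
  shows "W \<subseteq> ssum n Ws"
  using assms
proof (induction Ws)
  case Nil
  then show ?case by simp
next
  case (Cons W' Ws)
  have S: "subspace_vec n (ssum n Ws)" using Cons.prems by (intro subspace_vec_ssum) auto
  show ?case
  proof
    fix x assume x: "x \<in> W"
    have xc: "x \<in> carrier_vec n" using x Cons.prems subspace_vec_carrier by blast
    show "x \<in> ssum n (W' # Ws)"
    proof (cases "W = W'")
      case True
      moreover have "x = x + 0\<^sub>v n" using xc by simp
      ultimately show ?thesis using x subspace_vec_zero[OF S] by auto
    next
      case False
      then have "x \<in> ssum n Ws" using Cons x by auto
      moreover have "x = 0\<^sub>v n + x" using xc by simp
      ultimately show ?thesis using Cons.prems subspace_vec_zero[of n W'] by auto
    qed
  qed
qed

lemma ssum_least:
  assumes "subspace_vec n Z" and "\<And>W. W \<in> set Ws \<Longrightarrow> W \<subseteq> Z"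
  shows "ssum n Ws \<subseteq> Z"
  using assms(2)
    by (induction Ws) (auto intro: subspace_vec_zero[OF assms(1)] subspace_vec_add[OF assms(1)])

lemma ssum_mult_vec_into:
  assumes "M \<in> carrier_mat n n" "subspace_vec n Z"
    and "\<And>W. W \<in> set Ws \<Longrightarrow> W \<subseteq> carrier_vec n \<and> (\<forall>w\<in>W. M *\<^sub>v w \<in> Z)"
    and "v \<in> ssum n Ws"
  shows "M *\<^sub>v v \<in> Z"
  using ssum_least[OF subspace_vec_preimage[OF assms(1,2)], of Ws] assms(3,4) by blast

lemma ssum_invariant:
  assumes M: "M \<in> carrier_mat n n" and Ws: "\<And>W. W \<in> set Ws \<Longrightarrow> subspace_vec n W"
    and shift: "\<And>W w. W \<in> set Ws \<Longrightarrow> w \<in> W \<Longrightarrow> w \<noteq> 0\<^sub>v n \<Longrightarrow>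
      \<exists>c. char_matrix M c *\<^sub>v w \<in> ssum n Ws"
    and v: "v \<in> ssum n Ws"
  shows "M *\<^sub>v v \<in> ssum n Ws"
proof (rule ssum_mult_vec_into[OF M subspace_vec_ssum[OF Ws] _ v])
  have Z: "subspace_vec n (ssum n Ws)" by (rule subspace_vec_ssum[OF Ws])
  fix W assume W: "W \<in> set Ws"
  have "M *\<^sub>v w \<in> ssum n Ws" if w: "w \<in> W" for w
  proof (cases "w = 0\<^sub>v n")
    case True
    then show ?thesis using mult_mat_vec_zero[OF M] subspace_vec_zero[OF Z] by simp
  next
    case False
    obtain c where c: "char_matrix M c *\<^sub>v w \<in> ssum n Ws" using shift[OF W w False] by blast
    have "w \<in> carrier_vec n" using w Ws[OF W] subspace_vec_carrier by blast
    then have "M *\<^sub>v w = char_matrix M c *\<^sub>v w + c \<cdot>\<^sub>v w"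
      using M by (auto intro!: eq_vecI simp: char_matrix_mult_vec)
    moreover have "w \<in> ssum n Ws" using ssum_upper[OF Ws W] w by blast
    ultimately show ?thesis using c subspace_vec_add[OF Z] subspace_vec_smult[OF Z] by metis
  qed
  then show "W \<subseteq> carrier_vec n \<and> (\<forall>w\<in>W. M *\<^sub>v w \<in> ssum n Ws)"
    using Ws[OF W] subspace_vec_carrier by blast
qed

lemma ssum_append:
  assumes "\<And>W. W \<in> set (Ws @ Vs) \<Longrightarrow> W \<subseteq> carrier_vec n"
  shows "ssum n (Ws @ Vs) = {a + b | a b. a \<in> ssum n Ws \<and> b \<in> ssum n Vs}"
  using assms
proof (induction Ws)
  case Nil
  have "ssum n Vs \<subseteq> carrier_vec n" using Nil by (intro ssum_carrier) auto
  then have "b = 0\<^sub>v n + b" if "b \<in> ssum n Vs" for b using that by auto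
  then show ?case by force
next
  case (Cons W Ws)
  have IH: "ssum n (Ws @ Vs) = {a + b | a b. a \<in> ssum n Ws \<and> b \<in> ssum n Vs}"
    using Cons by auto
  have car: "W \<subseteq> carrier_vec n" "ssum n Ws \<subseteq> carrier_vec n" "ssum n Vs \<subseteq> carrier_vec n"
    using Cons.prems by (auto intro!: ssum_carrier)
  have assoc: "w + (a + b) = (w + a) + b" if "w \<in> W" "a \<in> ssum n Ws" "b \<in> ssum n Vs" for w a b
    using that car by (intro assoc_add_vec[symmetric]) auto
  show ?case unfolding append_Cons ssum.simps IH
  proof (intro equalityI subsetI)
    fix x assume "x \<in> {w + u |w u. w \<in> W \<and> u \<in> {a + b |a b. a \<in> ssum n Ws \<and> b \<in> ssum n Vs}}"
    then obtain w a b where "x = w + (a + b)" "w \<in> W" "a \<in> ssum n Ws" "b \<in> ssum n Vs" by blast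
    moreover from this have "x = (w + a) + b" using assoc by simp
    ultimately show "x \<in> {a + b |a b. a \<in> {w + u |w u. w \<in> W \<and> u \<in> ssum n Ws} \<and> b \<in> ssum n Vs}"
      by blast
  next
    fix x assume "x \<in> {a + b |a b. a \<in> {w + u |w u. w \<in> W \<and> u \<in> ssum n Ws} \<and> b \<in> ssum n Vs}"
    then obtain w a b where "x = (w + a) + b" "w \<in> W" "a \<in> ssum n Ws" "b \<in> ssum n Vs" by blast
    moreover from this have "x = w + (a + b)" using assoc by simp
    ultimately show "x \<in> {w + u |w u. w \<in> W \<and> u \<in> {a + b |a b. a \<in> ssum n Ws \<and> b \<in> ssum n Vs}}"
      by blast
  qed
qed

lemma ssum_single:
  assumes "W \<subseteq> carrier_vec n"
  shows "ssum n [W] = W"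
proof -
  have "w = w + 0\<^sub>v n" if "w \<in> W" for w using that assms by auto
  then show ?thesis by force
qed

lemma ssum_snocI:
  assumes "\<And>V. V \<in> set Ws \<Longrightarrow> V \<subseteq> carrier_vec n" "W \<subseteq> carrier_vec n" "a \<in> ssum n Ws" "b \<in> W"
  shows "a + b \<in> ssum n (Ws @ [W])"
  using assms ssum_single[OF assms(2)] by (subst ssum_append) auto

subsection \<open>Eigenspaces and primitive idempotents\<close>

definition eigenspace :: "nat \<Rightarrow> 'a::field mat \<Rightarrow> 'a \<Rightarrow> 'a vec set" where
  "eigenspace n X \<mu> = {v \<in> carrier_vec n. X *\<^sub>v v = \<mu> \<cdot>\<^sub>v v}"

lemma eigenspace_iff_char_matrix:
  assumes "X \<in> carrier_mat n n"
  shows "v \<in> eigenspace n X c \<longleftrightarrow> v \<in> carrier_vec n \<and> char_matrix X c *\<^sub>v v = 0\<^sub>v n"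
  using minus_vec_eq_zero_iff[of "X *\<^sub>v v" n "c \<cdot>\<^sub>v v"] assms
  by (auto simp: eigenspace_def char_matrix_mult_vec)

lemma char_matrix_eigenspace:
  assumes "X \<in> carrier_mat n n" "v \<in> eigenspace n X \<mu>"
  shows "char_matrix X c *\<^sub>v v = (\<mu> - c) \<cdot>\<^sub>v v"
  using assms by (auto simp: eigenspace_def char_matrix_mult_vec algebra_simps intro!: eq_vecI)

lemma subspace_vec_eigenspace: "X \<in> carrier_mat n n \<Longrightarrow> subspace_vec n (eigenspace n X \<mu>)"
  by (auto simp: subspace_vec_def eigenspace_def mult_add_distrib_mat_vec mult_mat_vec
      smult_add_distrib_vec)

lemma eigenvalue_if_eigenspace:
  assumes "X \<in> carrier_mat n n" "v \<in> eigenspace n X \<mu>" "v \<noteq> 0\<^sub>v n"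
  shows "\<mu> \<in> eigenvalues_of X"
  using assms by (auto simp: eigenvalues_of_def eigenvalue_def eigenvector_def eigenspace_def)

lemma finite_eigenvalues_of:
  assumes "X \<in> carrier_mat n n"
  shows "finite (eigenvalues_of X)"
proof -
  have "char_poly X \<noteq> 0" using degree_monic_char_poly[OF assms] by auto
  then have "finite {k. poly (char_poly X) k = 0}" by (rule poly_roots_finite)
  moreover have "eigenvalues_of X \<subseteq> {k. poly (char_poly X) k = 0}"
    unfolding eigenvalues_of_def using eigenvalue_root_char_poly[OF assms] by auto
  ultimately show ?thesis by (rule finite_subset[rotated])
qed

lemma mat_prod_list_carrier:
  "(\<And>M. M \<in> set Ms \<Longrightarrow> M \<in> carrier_mat n n) \<Longrightarrow> mat_prod_list n Ms \<in> carrier_mat n n"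
  unfolding mat_prod_list_def by (induction Ms) (auto intro!: mult_carrier_mat)

lemma prim_idem_carrier: "X \<in> carrier_mat n n \<Longrightarrow> prim_idem X lam \<in> carrier_mat n n"
  unfolding prim_idem_def Let_def by (auto intro!: mat_prod_list_carrier simp: minus_carrier_mat)

lemma mat_prod_list_eigenspace:
  assumes X: "X \<in> carrier_mat n n" and v: "v \<in> eigenspace n X \<mu>"
  shows "mat_prod_list n (map (\<lambda>\<nu>. c \<nu> \<cdot>\<^sub>m (X - \<nu> \<cdot>\<^sub>m 1\<^sub>m n)) \<nu>s) *\<^sub>v v
       = (\<Prod>\<nu>\<leftarrow>\<nu>s. c \<nu> * (\<mu> - \<nu>)) \<cdot>\<^sub>v v"
proof (induction \<nu>s)
  case Nil
  then show ?case using v by (simp add: mat_prod_list_def eigenspace_def)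
next
  case (Cons \<nu> \<nu>s)
  let ?R = "mat_prod_list n (map (\<lambda>\<nu>. c \<nu> \<cdot>\<^sub>m (X - \<nu> \<cdot>\<^sub>m 1\<^sub>m n)) \<nu>s)"
  have R: "?R \<in> carrier_mat n n" using X by (intro mat_prod_list_carrier) auto
  have vc: "v \<in> carrier_vec n" and Xv: "X *\<^sub>v v = \<mu> \<cdot>\<^sub>v v" using v by (auto simp: eigenspace_def)
  have factor: "(c \<nu> \<cdot>\<^sub>m (X - \<nu> \<cdot>\<^sub>m 1\<^sub>m n)) *\<^sub>v v = (c \<nu> * (\<mu> - \<nu>)) \<cdot>\<^sub>v v"
  proof -
    have "(X - \<nu> \<cdot>\<^sub>m 1\<^sub>m n) *\<^sub>v v = X *\<^sub>v v - (\<nu> \<cdot>\<^sub>m 1\<^sub>m n) *\<^sub>v v"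
      using X vc by (intro minus_mult_distrib_mat_vec) auto
    also have "(\<nu> \<cdot>\<^sub>m 1\<^sub>m n) *\<^sub>v v = \<nu> \<cdot>\<^sub>v v"
      using vc by (simp add: smult_mat_mult_vec[of "1\<^sub>m n" n n])
    finally have "(X - \<nu> \<cdot>\<^sub>m 1\<^sub>m n) *\<^sub>v v = (\<mu> - \<nu>) \<cdot>\<^sub>v v"
      using Xv vc by (auto intro!: eq_vecI simp: algebra_simps)
    then show ?thesis
      using smult_mat_mult_vec[of "X - \<nu> \<cdot>\<^sub>m 1\<^sub>m n" n n v "c \<nu>"] X vc
      by (auto intro!: eq_vecI simp: minus_carrier_mat)
  qed
  have F: "c \<nu> \<cdot>\<^sub>m (X - \<nu> \<cdot>\<^sub>m 1\<^sub>m n) \<in> carrier_mat n n"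
    using X by (simp add: minus_carrier_mat)
  have "mat_prod_list n (map (\<lambda>\<nu>. c \<nu> \<cdot>\<^sub>m (X - \<nu> \<cdot>\<^sub>m 1\<^sub>m n)) (\<nu> # \<nu>s))
      = (c \<nu> \<cdot>\<^sub>m (X - \<nu> \<cdot>\<^sub>m 1\<^sub>m n)) * ?R"
    by (simp add: mat_prod_list_def)
  then have "mat_prod_list n (map (\<lambda>\<nu>. c \<nu> \<cdot>\<^sub>m (X - \<nu> \<cdot>\<^sub>m 1\<^sub>m n)) (\<nu> # \<nu>s)) *\<^sub>v v
      = (c \<nu> \<cdot>\<^sub>m (X - \<nu> \<cdot>\<^sub>m 1\<^sub>m n)) *\<^sub>v (?R *\<^sub>v v)"
    using assoc_mult_mat_vec[OF F R vc] by simp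
  also have "\<dots> = (\<Prod>\<nu>\<leftarrow>\<nu>s. c \<nu> * (\<mu> - \<nu>)) \<cdot>\<^sub>v ((c \<nu> \<cdot>\<^sub>m (X - \<nu> \<cdot>\<^sub>m 1\<^sub>m n)) *\<^sub>v v)"
    unfolding Cons using X vc by (intro mult_mat_vec) auto
  also have "\<dots> = (\<Prod>\<nu>\<leftarrow>\<nu> # \<nu>s. c \<nu> * (\<mu> - \<nu>)) \<cdot>\<^sub>v v"
    unfolding factor using vc by (auto intro!: eq_vecI)
  finally show ?case .
qed

lemma prim_idem_eigenspace:
  assumes X: "X \<in> carrier_mat n n" and v: "v \<in> eigenspace n X \<mu>"
  shows "prim_idem X lam *\<^sub>v v = (if \<mu> = lam then v else 0\<^sub>v n)"
proof -
  define \<nu>s where "\<nu>s = (SOME \<nu>s. distinct \<nu>s \<and> set \<nu>s = eigenvalues_of X - {lam})"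
  have "\<exists>\<nu>s. distinct \<nu>s \<and> set \<nu>s = eigenvalues_of X - {lam}"
    using finite_distinct_list finite_eigenvalues_of[OF X] by blast
  then have \<nu>s: "set \<nu>s = eigenvalues_of X - {lam}"
    unfolding \<nu>s_def by (metis (mono_tags, lifting) someI_ex)
  have vc: "v \<in> carrier_vec n" using v by (simp add: eigenspace_def)
  have act: "prim_idem X lam *\<^sub>v v = (\<Prod>\<nu>\<leftarrow>\<nu>s. 1 / (lam - \<nu>) * (\<mu> - \<nu>)) \<cdot>\<^sub>v v"
    unfolding prim_idem_def Let_def \<nu>s_def[symmetric] using X
    by (simp add: mat_prod_list_eigenspace[OF X v])
  show ?thesis
  proof (cases "\<mu> = lam")
    case True
    then have "(\<Prod>\<nu>\<leftarrow>\<nu>s. 1 / (lam - \<nu>) * (\<mu> - \<nu>)) = 1"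
      using \<nu>s by (intro prod_list_neutral) auto
    then show ?thesis using act vc True by simp
  next
    case False
    show ?thesis
    proof (cases "v = 0\<^sub>v n")
      case True
      then show ?thesis using act False by (auto intro!: eq_vecI)
    next
      case nonzero: False
      \<comment> \<open>the factor for \<open>\<nu> = \<mu>\<close> occurs in the product and vanishes\<close>
      have "(\<Prod>\<nu>\<leftarrow>\<nu>s. 1 / (lam - \<nu>) * (\<mu> - \<nu>)) = 0"
        using \<nu>s False eigenvalue_if_eigenspace[OF X v nonzero] by (auto simp: prod_list_zero_iff)
      then show ?thesis using act vc False by (auto intro!: eq_vecI)
    qed
  qed
qed

lemma prim_idem_ssum_eigenspaces_zero:
  assumes X: "X \<in> carrier_mat n n" and "lam \<notin> f ` set xs"
    and "v \<in> ssum n (map (\<lambda>i. eigenspace n X (f i)) xs)"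
  shows "prim_idem X lam *\<^sub>v v = 0\<^sub>v n"
  using assms
  by (intro ssum_mult_vec_into[of _ n "{0\<^sub>v n}", simplified] prim_idem_carrier
      subspace_vec_zero_space)
     (auto simp: prim_idem_eigenspace eigenspace_def)

lemma diagonalizable_ssum_eigenspaces:
  assumes X: "X \<in> carrier_mat n n" and "diagonalizable_mat X"
    and evs: "eigenvalues_of X \<subseteq> f ` set xs"
  shows "carrier_vec n \<subseteq> ssum n (map (\<lambda>i. eigenspace n X (f i)) xs)"
proof
  let ?Z = "ssum n (map (\<lambda>i. eigenspace n X (f i)) xs)"
  have Z: "subspace_vec n ?Z" using X by (auto intro!: subspace_vec_ssum subspace_vec_eigenspace)
  obtain D P Q where "diagonal_mat D" "similar_mat_wit X D P Q"
    using assms(2) unfolding diagonalizable_mat_def similar_mat_def by blast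
  then have c: "D \<in> carrier_mat n n" "P \<in> carrier_mat n n" "Q \<in> carrier_mat n n"
    and PQ: "P * Q = 1\<^sub>m n" and QP: "Q * P = 1\<^sub>m n" and XD: "X = P * D * Q"
    and diag: "\<And>i j. i < n \<Longrightarrow> j < n \<Longrightarrow> i \<noteq> j \<Longrightarrow> D $$ (i, j) = 0"
    using X unfolding similar_mat_wit_def diagonal_mat_def by auto
  \<comment> \<open>each column of \<open>P\<close> is an eigenvector of \<open>X\<close> (or zero)\<close>
  have cols: "col P m \<in> ?Z" if m: "m < n" for m
  proof -
    have Pe: "P *\<^sub>v unit_vec n m = col P m"
      using c m by (simp add: mult_mat_vec_unit_vec)
    have "D *\<^sub>v unit_vec n m = col D m"
      using c m by (simp add: mult_mat_vec_unit_vec)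
    also have "\<dots> = D $$ (m, m) \<cdot>\<^sub>v unit_vec n m"
      using c m diag by (intro eq_vecI) auto
    finally have De: "D *\<^sub>v unit_vec n m = D $$ (m, m) \<cdot>\<^sub>v unit_vec n m" .
    moreover have "Q *\<^sub>v col P m = unit_vec n m"
      unfolding Pe[symmetric] using c QP by (simp add: assoc_mult_mat_vec[symmetric])
    moreover have "X *\<^sub>v col P m = P *\<^sub>v (D *\<^sub>v (Q *\<^sub>v col P m))"
      unfolding XD using c
      by (subst assoc_mult_mat_vec[of _ n n _ n], auto)+
    ultimately have "X *\<^sub>v col P m = P *\<^sub>v (D $$ (m, m) \<cdot>\<^sub>v unit_vec n m)" by simp
    also have "\<dots> = D $$ (m, m) \<cdot>\<^sub>v col P m"
      using c Pe by (simp add: mult_mat_vec)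
    finally have "X *\<^sub>v col P m = D $$ (m, m) \<cdot>\<^sub>v col P m" .
    then have ev: "col P m \<in> eigenspace n X (D $$ (m, m))"
      using c Pe[symmetric] by (simp add: eigenspace_def)
    show ?thesis
    proof (cases "col P m = 0\<^sub>v n")
      case True
      then show ?thesis using subspace_vec_zero[OF Z] by simp
    next
      case False
      then obtain i where "i \<in> set xs" "D $$ (m, m) = f i"
        using eigenvalue_if_eigenspace[OF X ev] evs by auto
      then show ?thesis
        using ev X by (auto intro!: ssum_upper[THEN subsetD] subspace_vec_eigenspace)
    qed
  qed
  fix v :: "'a vec" assume v: "v \<in> carrier_vec n"
  have "P *\<^sub>v (Q *\<^sub>v v) = v" using c v PQ by (simp add: assoc_mult_mat_vec[symmetric])
  then show "v \<in> ?Z" using mult_mat_vec_in_subspace[OF c(2) Z cols, of "Q *\<^sub>v v"] c v by auto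
qed

lemma image_prim_idem:
  assumes X: "X \<in> carrier_mat n n"
    and diag: "carrier_vec n \<subseteq> ssum n (map (\<lambda>i. eigenspace n X (f i)) xs)"
  shows "image_mat (prim_idem X lam) = eigenspace n X lam"
proof
  have E: "prim_idem X lam \<in> carrier_mat n n" using prim_idem_carrier[OF X] .
  have "prim_idem X lam *\<^sub>v w \<in> eigenspace n X lam" if "w \<in> eigenspace n X \<mu>" for w \<mu>
    using that subspace_vec_zero[OF subspace_vec_eigenspace[OF X]]
      by (auto simp: prim_idem_eigenspace[OF X])
  then have "prim_idem X lam *\<^sub>v v \<in> eigenspace n X lam" if "v \<in> carrier_vec n" for v
    using that diag
    by (intro ssum_mult_vec_into[OF E subspace_vec_eigenspace[OF X]]) (auto simp: eigenspace_def)
  then show "image_mat (prim_idem X lam) \<subseteq> eigenspace n X lam"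
    unfolding image_mat_def using E by auto
  show "eigenspace n X lam \<subseteq> image_mat (prim_idem X lam)"
  proof
    fix v assume "v \<in> eigenspace n X lam"
    then have "v \<in> carrier_vec n" "prim_idem X lam *\<^sub>v v = v"
      using prim_idem_eigenspace[OF X] by (auto simp: eigenspace_def)
    then show "v \<in> image_mat (prim_idem X lam)"
      unfolding image_mat_def using E by (intro CollectI exI[of _ v]) auto
  qed
qed

lemma char_matrix_ssum_eigenspaces:
  assumes X: "X \<in> carrier_mat n n" and Z: "subspace_vec n Z"
    and "\<And>i. i \<in> set xs \<Longrightarrow> i \<noteq> k \<Longrightarrow> eigenspace n X (f i) \<subseteq> Z"
    and "v \<in> ssum n (map (\<lambda>i. eigenspace n X (f i)) xs)"
  shows "char_matrix X (f k) *\<^sub>v v \<in> Z"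
proof (rule ssum_mult_vec_into[of _ n])
  show "char_matrix X (f k) \<in> carrier_mat n n" using X by simp
  fix W assume "W \<in> set (map (\<lambda>i. eigenspace n X (f i)) xs)"
  then obtain i where i: "i \<in> set xs" "W = eigenspace n X (f i)" by auto
  have "char_matrix X (f k) *\<^sub>v w \<in> Z" if w: "w \<in> W" for w
  proof (cases "i = k")
    case True
    then have w': "w \<in> eigenspace n X (f k)" using w i by simp
    have "char_matrix X (f k) *\<^sub>v w = (f k - f k) \<cdot>\<^sub>v w" by (rule char_matrix_eigenspace[OF X w'])
    also have "\<dots> = 0\<^sub>v n" using w' by (auto intro!: eq_vecI simp: eigenspace_def)
    finally show ?thesis using subspace_vec_zero[OF Z] by simp
  next
    case False
    have "w \<in> Z" using assms(3)[OF i(1) False] w i(2) by auto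
    then show ?thesis using char_matrix_eigenspace[OF X, of w "f i"] w i(2) subspace_vec_smult[OF Z]
      by simp
  qed
  then show "W \<subseteq> carrier_vec n \<and> (\<forall>w\<in>W. char_matrix X (f k) *\<^sub>v w \<in> Z)"
    using i by (auto simp: eigenspace_def)
qed (use assms in auto)

lemma char_matrix_onto_ssum_eigenspaces:
  assumes X: "X \<in> carrier_mat n n" and "c \<notin> f ` set xs"
    and "y \<in> ssum n (map (\<lambda>i. eigenspace n X (f i)) xs)"
  shows "\<exists>z \<in> ssum n (map (\<lambda>i. eigenspace n X (f i)) xs). char_matrix X c *\<^sub>v z = y"
  using assms(2-)
proof (induction xs arbitrary: y)
  case Nil
  then show ?case using X by (auto intro!: eq_vecI simp: char_matrix_mult_vec)
next
  case (Cons x xs)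
  obtain a b where y: "y = a + b" and a: "a \<in> eigenspace n X (f x)"
    and b: "b \<in> ssum n (map (\<lambda>i. eigenspace n X (f i)) xs)"
    using Cons.prems(2) by auto
  obtain z where z: "z \<in> ssum n (map (\<lambda>i. eigenspace n X (f i)) xs)" "char_matrix X c *\<^sub>v z = b"
    using Cons b by auto
  define a' where "a' = (1 / (f x - c)) \<cdot>\<^sub>v a"
  have a': "a' \<in> eigenspace n X (f x)"
    unfolding a'_def using subspace_vec_smult[OF subspace_vec_eigenspace[OF X] a] .
  have "char_matrix X c *\<^sub>v a' = a"
    using char_matrix_eigenspace[OF X a'] Cons.prems(1) a
    by (auto intro!: eq_vecI simp: a'_def eigenspace_def)
  moreover have "char_matrix X c *\<^sub>v (a' + z) = char_matrix X c *\<^sub>v a' + char_matrix X c *\<^sub>v z"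
    using X a' z by (intro mult_add_distrib_mat_vec[of _ n n])
      (auto simp: eigenspace_def dest!: ssum_carrier[THEN subsetD, rotated])
  ultimately show ?case using y z a' by auto
qed

lemma ssum_eigenspaces_filter:
  assumes X: "X \<in> carrier_mat n n" and "distinct xs" and "inj_on f (set xs)"
    and "v \<in> ssum n (map (\<lambda>i. eigenspace n X (f i)) xs)"
    and "\<And>l. l \<in> set xs \<Longrightarrow> \<not> P l \<Longrightarrow> prim_idem X (f l) *\<^sub>v v = 0\<^sub>v n"
  shows "v \<in> ssum n (map (\<lambda>i. eigenspace n X (f i)) (filter P xs))"
  using assms(2-)
proof (induction xs arbitrary: v)
  case Nil
  then show ?case by simp
next
  case (Cons x xs)
  obtain a b where v: "v = a + b" and a: "a \<in> eigenspace n X (f x)"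
    and b: "b \<in> ssum n (map (\<lambda>i. eigenspace n X (f i)) xs)"
    using Cons.prems(3) by auto
  have ac: "a \<in> carrier_vec n" using a by (simp add: eigenspace_def)
  have bc: "b \<in> carrier_vec n"
    using b X by (auto dest!: ssum_carrier[THEN subsetD, rotated] simp: eigenspace_def)
  have Eb: "prim_idem X (f x) *\<^sub>v b = 0\<^sub>v n"
    using prim_idem_ssum_eigenspaces_zero[OF X _ b] Cons.prems(1,2) by (auto simp: inj_on_def)
  have Ea: "prim_idem X (f l) *\<^sub>v a = 0\<^sub>v n" if "l \<in> set xs" for l
    using prim_idem_eigenspace[OF X a] that Cons.prems(1,2) by (auto simp: inj_on_def)
  have Ev: "prim_idem X lam *\<^sub>v v = prim_idem X lam *\<^sub>v a + prim_idem X lam *\<^sub>v b" for lam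
    unfolding v using prim_idem_carrier[OF X] ac bc by (rule mult_add_distrib_mat_vec)
  have IH: "b \<in> ssum n (map (\<lambda>i. eigenspace n X (f i)) (filter P xs))"
  proof (rule Cons.IH)
    fix l assume "l \<in> set xs" "\<not> P l"
    then show "prim_idem X (f l) *\<^sub>v b = 0\<^sub>v n"
      using Cons.prems(4)[of l] Ev[of "f l"] Ea[of l]
        mult_mat_vec_carrier[OF prim_idem_carrier[OF X] bc]
      by auto
  qed (use Cons.prems b in \<open>auto simp: inj_on_def\<close>)
  show ?case
  proof (cases "P x")
    case True
    then show ?thesis using v a IH by auto
  next
    case False
    have "a = 0\<^sub>v n"
      using Cons.prems(4)[of x] False Ev[of "f x"] Eb prim_idem_eigenspace[OF X a] ac by auto
    then show ?thesis using v IH False bc by auto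
  qed
qed

lemma tridiagonal_image_eigenspace:
  assumes X: "X \<in> carrier_mat n n" and Y: "Y \<in> carrier_mat n n" and "inj_on f {..<Suc d}"
    and diag: "carrier_vec n \<subseteq> ssum n (map (\<lambda>i. eigenspace n X (f i)) [0..<Suc d])"
    and tri: "\<And>i. i \<le> d \<Longrightarrow> j + 1 < i \<or> i + 1 < j \<Longrightarrow>
      prim_idem X (f i) * Y * prim_idem X (f j) = 0\<^sub>m n n"
    and x: "x \<in> eigenspace n X (f j)"
  shows "Y *\<^sub>v x \<in> ssum n (map (\<lambda>i. eigenspace n X (f i))
    (filter (\<lambda>i. i \<le> j + 1 \<and> j \<le> i + 1) [0..<Suc d]))"
proof (rule ssum_eigenspaces_filter[OF X])
  have xc: "x \<in> carrier_vec n" using x by (simp add: eigenspace_def)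
  then show "Y *\<^sub>v x \<in> ssum n (map (\<lambda>i. eigenspace n X (f i)) [0..<Suc d])" using diag Y by auto
  fix l assume l: "l \<in> set [0..<Suc d]" "\<not> (l \<le> j + 1 \<and> j \<le> l + 1)"
  have E: "\<And>lam. prim_idem X lam \<in> carrier_mat n n" using prim_idem_carrier[OF X] .
  have "prim_idem X (f l) *\<^sub>v (Y *\<^sub>v x) = prim_idem X (f l) *\<^sub>v (Y *\<^sub>v (prim_idem X (f j) *\<^sub>v x))"
    using prim_idem_eigenspace[OF X x] by simp
  also have "\<dots> = (prim_idem X (f l) * Y * prim_idem X (f j)) *\<^sub>v x"
    using E[of "f l"] E[of "f j"] Y xc by (subst assoc_mult_mat_vec[of _ n n _ n], auto)+
  also have "\<dots> = 0\<^sub>v n" using tri[of l] l xc by auto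
  finally show "prim_idem X (f l) *\<^sub>v (Y *\<^sub>v x) = 0\<^sub>v n" .
qed (use assms(3) in \<open>auto simp del: upt_Suc simp: lessThan_atLeast0\<close>)

subsection \<open>Operators triangular with respect to a flag\<close>

definition triangular_flag ::
  "nat \<Rightarrow> 'a::field mat \<Rightarrow> (nat \<Rightarrow> 'a) \<Rightarrow> (nat \<Rightarrow> 'a vec set) \<Rightarrow> nat \<Rightarrow> bool" where
  "triangular_flag n X c F m \<longleftrightarrow> F 0 = {0\<^sub>v n} \<and>
     (\<forall>k<m. subspace_vec n (F (Suc k)) \<and> (\<forall>x\<in>F (Suc k). char_matrix X (c k) *\<^sub>v x \<in> F k))"

lemma triangular_flag_ssum_eigenspaces:
  assumes X: "X \<in> carrier_mat n n" and "triangular_flag n X c F m" and "inj_on c {..<m}"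
  shows "F m \<subseteq> ssum n (map (\<lambda>i. eigenspace n X (c i)) [0..<m])"
  using assms(2,3)
proof (induction m)
  case 0
  then show ?case by (simp add: triangular_flag_def)
next
  case (Suc m)
  have flag: "triangular_flag n X c F m" using Suc.prems(1) by (simp add: triangular_flag_def)
  have inj: "inj_on c {..<m}" using Suc.prems(2) by (rule inj_on_subset) auto
  have "c m \<notin> c ` {..<m}" using inj_on_image_mem_iff[OF Suc.prems(2), of m "{..<m}"] by auto
  show ?case
  proof
    fix x assume x: "x \<in> F (Suc m)"
    have F: "subspace_vec n (F (Suc m))" and "char_matrix X (c m) *\<^sub>v x \<in> F m"
      using Suc.prems(1) x by (auto simp: triangular_flag_def)
    then have "char_matrix X (c m) *\<^sub>v x \<in> ssum n (map (\<lambda>i. eigenspace n X (c i)) [0..<m])"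
      using Suc.IH[OF flag inj] by blast
    \<comment> \<open>\<open>x\<close> differs from some \<open>z\<close> in that sum by an eigenvector for \<open>c m\<close>\<close>
    then obtain z where z: "z \<in> ssum n (map (\<lambda>i. eigenspace n X (c i)) [0..<m])"
      "char_matrix X (c m) *\<^sub>v z = char_matrix X (c m) *\<^sub>v x"
      using char_matrix_onto_ssum_eigenspaces[OF X, of "c m" c "[0..<m]"] \<open>c m \<notin> c ` {..<m}\<close>
      by (auto simp: atLeast0LessThan)
    have xc: "x \<in> carrier_vec n" using F x subspace_vec_carrier by blast
    have zc: "z \<in> carrier_vec n"
      using z(1) X by (auto dest!: ssum_carrier[THEN subsetD, rotated] simp: eigenspace_def)
    have C: "char_matrix X (c m) \<in> carrier_mat n n" using X by simp
    have "char_matrix X (c m) *\<^sub>v (x - z) = 0\<^sub>v n"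
      using C xc zc z(2) by (auto simp: mult_minus_distrib_mat_vec[OF C xc zc] intro!: eq_vecI)
    then have "x - z \<in> eigenspace n X (c m)" using X xc zc by (simp add: eigenspace_iff_char_matrix)
    then have "z + (x - z) \<in> ssum n (map (\<lambda>i. eigenspace n X (c i)) [0..<m] @ [eigenspace n X (c m)])"
      using z(1) by (intro ssum_snocI) (auto simp: eigenspace_def)
    moreover have "z + (x - z) = x" using xc zc by (intro eq_vecI) auto
    ultimately show "x \<in> ssum n (map (\<lambda>i. eigenspace n X (c i)) [0..<Suc m])" by simp
  qed
qed

lemma triangular_flag_eigenspace_bottom:
  assumes X: "X \<in> carrier_mat n n" and "triangular_flag n X c F m" and "inj_on c {..<m}"
    and "x \<in> F m" and "0 < m" and "X *\<^sub>v x = c 0 \<cdot>\<^sub>v x"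
  shows "x \<in> F 1"
  using assms(2-)
proof (induction m)
  case (Suc m)
  show ?case
  proof (cases "m = 0")
    case False
    have F: "subspace_vec n (F m)" "subspace_vec n (F (Suc m))"
      using Suc.prems(1) False by (auto simp: triangular_flag_def gr0_conv_Suc)
    have xc: "x \<in> carrier_vec n" using F(2) Suc.prems(3) subspace_vec_carrier by blast
    have ne: "c 0 - c m \<noteq> 0" using Suc.prems(2) False by (auto simp: inj_on_def)
    have "char_matrix X (c m) *\<^sub>v x \<in> F m" using Suc.prems(1,3) by (auto simp: triangular_flag_def)
    moreover have "char_matrix X (c m) *\<^sub>v x = (c 0 - c m) \<cdot>\<^sub>v x"
      using char_matrix_eigenspace[OF X] Suc.prems(5) xc by (simp add: eigenspace_def)
    ultimately have "(1 / (c 0 - c m)) \<cdot>\<^sub>v ((c 0 - c m) \<cdot>\<^sub>v x) \<in> F m"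
      using subspace_vec_smult[OF F(1)] by simp
    then have "x \<in> F m" using ne xc by (simp add: smult_smult_assoc)
    then show ?thesis
      using Suc.IH Suc.prems False by (auto simp: triangular_flag_def inj_on_def)
  qed (use Suc.prems in simp)
qed simp

subsection \<open>The split decomposition\<close>

locale tridiagonal_setting =
  fixes n d :: nat and A As :: "'a::field mat" and th ths :: "nat \<Rightarrow> 'a"
  assumes tridiagonal: "tridiagonal_system n d A th As ths"
begin

declare upt_Suc[simp del]

lemma A_carrier: "A \<in> carrier_mat n n"
  and As_carrier: "As \<in> carrier_mat n n"
  and inj_th: "inj_on th {..<Suc d}"
  and inj_ths: "inj_on ths {..<Suc d}"
  using tridiagonal by (auto simp: tridiagonal_system_def lessThan_Suc_atMost atLeast0AtMost)

lemma tridiagonal_A: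
  "i \<le> d \<Longrightarrow> j \<le> d \<Longrightarrow> j + 1 < i \<or> i + 1 < j \<Longrightarrow>
    prim_idem A (th i) * As * prim_idem A (th j) = 0\<^sub>m n n"
  and tridiagonal_As:
  "i \<le> d \<Longrightarrow> j \<le> d \<Longrightarrow> j + 1 < i \<or> i + 1 < j \<Longrightarrow>
    prim_idem As (ths i) * A * prim_idem As (ths j) = 0\<^sub>m n n"
  using tridiagonal by (auto simp: tridiagonal_system_def)

lemma irreducible:
  "subspace_vec n W \<Longrightarrow> \<forall>w\<in>W. A *\<^sub>v w \<in> W \<Longrightarrow> \<forall>w\<in>W. As *\<^sub>v w \<in> W \<Longrightarrow>
    W = {0\<^sub>v n} \<or> W = carrier_vec n"
  using tridiagonal by (auto simp: tridiagonal_system_def)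

definition E :: "nat \<Rightarrow> 'a vec set" where "E i = eigenspace n A (th i)"
definition Es :: "nat \<Rightarrow> 'a vec set" where "Es i = eigenspace n As (ths i)"

definition flag :: "nat \<Rightarrow> 'a vec set" where "flag k = ssum n (map Es [0..<k])"
definition tail :: "nat \<Rightarrow> 'a vec set" where "tail j = ssum n (map E [j..<Suc d])"
definition U :: "nat \<Rightarrow> 'a vec set" where "U i = flag (Suc i) \<inter> tail i"

lemma subspace_E: "subspace_vec n (E i)"
  and subspace_Es: "subspace_vec n (Es i)"
  unfolding E_def Es_def by (simp_all add: subspace_vec_eigenspace A_carrier As_carrier)

lemma subspace_flag: "subspace_vec n (flag k)"
  and subspace_tail: "subspace_vec n (tail j)"
  and subspace_U: "subspace_vec n (U i)"
  unfolding flag_def tail_def U_def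
  by (auto intro!: subspace_vec_ssum subspace_vec_Int simp: subspace_E subspace_Es)

lemma flag_carrier: "x \<in> flag k \<Longrightarrow> x \<in> carrier_vec n"
  and tail_carrier: "x \<in> tail j \<Longrightarrow> x \<in> carrier_vec n"
  using subspace_flag subspace_tail subspace_vec_carrier by blast+

lemma Es_subset_flag: "i < k \<Longrightarrow> Es i \<subseteq> flag k"
  unfolding flag_def by (rule ssum_upper) (auto simp: subspace_Es)

lemma E_subset_tail: "j \<le> i \<Longrightarrow> i \<le> d \<Longrightarrow> E i \<subseteq> tail j"
  unfolding tail_def by (rule ssum_upper) (auto simp: subspace_E)

lemma flag_mono:
  assumes "k \<le> k'"
  shows "flag k \<subseteq> flag k'"
  unfolding flag_def[of k]
proof (rule ssum_least[OF subspace_flag])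
  fix W assume "W \<in> set (map Es [0..<k])"
  then obtain i where "i < k" "W = Es i" by auto
  then show "W \<subseteq> flag k'" using Es_subset_flag[of i k'] assms by simp
qed

lemma tail_antimono:
  assumes "j \<le> j'"
  shows "tail j' \<subseteq> tail j"
  unfolding tail_def[of j']
proof (rule ssum_least[OF subspace_tail])
  fix W assume "W \<in> set (map E [j'..<Suc d])"
  then obtain i where "j' \<le> i" "i \<le> d" "W = E i" by auto
  then show "W \<subseteq> tail j" using E_subset_tail[of j i] assms by simp
qed

lemma flag_0: "flag 0 = {0\<^sub>v n}"
  and tail_Suc_d: "tail (Suc d) = {0\<^sub>v n}"
  by (simp_all add: flag_def tail_def)

lemma flag_1: "flag 1 = Es 0"
proof -
  have "flag 1 = ssum n [Es 0]" by (simp add: flag_def upt_Suc del: ssum.simps)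
  then show ?thesis using ssum_single subspace_vec_carrier[OF subspace_Es] by metis
qed

lemma diagonal_A: "carrier_vec n \<subseteq> ssum n (map E [0..<Suc d])"
  and diagonal_As: "carrier_vec n \<subseteq> ssum n (map Es [0..<Suc d])"
  unfolding E_def Es_def using tridiagonal
  by (intro diagonalizable_ssum_eigenspaces A_carrier As_carrier;
      force simp: tridiagonal_system_def atLeastLessThanSuc_atLeastAtMost)+

lemma tail_0: "tail 0 = carrier_vec n"
  and flag_Suc_d: "flag (Suc d) = carrier_vec n"
  using diagonal_A diagonal_As tail_carrier flag_carrier unfolding tail_def flag_def by blast+

lemma split_comp_eq_U: "split_comp n d A th As ths i = U i"
proof -
  have "image_mat (prim_idem As (ths k)) = Es k" "image_mat (prim_idem A (th k)) = E k" for k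
    using image_prim_idem[OF As_carrier diagonal_As[unfolded Es_def]]
      image_prim_idem[OF A_carrier diagonal_A[unfolded E_def]]
    by (simp_all add: E_def Es_def)
  then show ?thesis by (simp add: split_comp_def U_def flag_def tail_def)
qed

lemma A_Es_flag:
  assumes "i \<le> d" "x \<in> Es i"
  shows "A *\<^sub>v x \<in> flag (Suc (Suc i))"
proof -
  have "A *\<^sub>v x \<in> ssum n (map Es (filter (\<lambda>l. l \<le> i + 1 \<and> i \<le> l + 1) [0..<Suc d]))"
    unfolding Es_def
    by (rule tridiagonal_image_eigenspace[OF As_carrier A_carrier inj_ths
          diagonal_As[unfolded Es_def]])
       (use tridiagonal_As assms in \<open>auto simp: Es_def\<close>)
  moreover have
    "ssum n (map Es (filter (\<lambda>l. l \<le> i + 1 \<and> i \<le> l + 1) [0..<Suc d])) \<subseteq> flag (Suc (Suc i))"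
  proof (rule ssum_least[OF subspace_flag])
    fix W assume "W \<in> set (map Es (filter (\<lambda>l. l \<le> i + 1 \<and> i \<le> l + 1) [0..<Suc d]))"
    then obtain l where "l \<le> i + 1" "W = Es l" by auto
    then show "W \<subseteq> flag (Suc (Suc i))" using Es_subset_flag[of l "Suc (Suc i)"] by simp
  qed
  ultimately show ?thesis by blast
qed

lemma As_E_tail:
  assumes "i \<le> d" "x \<in> E i"
  shows "As *\<^sub>v x \<in> tail (i - 1)"
proof -
  have "As *\<^sub>v x \<in> ssum n (map E (filter (\<lambda>l. l \<le> i + 1 \<and> i \<le> l + 1) [0..<Suc d]))"
    unfolding E_def
    by (rule tridiagonal_image_eigenspace[OF A_carrier As_carrier inj_th
          diagonal_A[unfolded E_def]])
       (use tridiagonal_A assms in \<open>auto simp: E_def\<close>)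
  moreover have "ssum n (map E (filter (\<lambda>l. l \<le> i + 1 \<and> i \<le> l + 1) [0..<Suc d])) \<subseteq> tail (i - 1)"
  proof (rule ssum_least[OF subspace_tail])
    fix W assume "W \<in> set (map E (filter (\<lambda>l. l \<le> i + 1 \<and> i \<le> l + 1) [0..<Suc d]))"
    then obtain l where "i \<le> l + 1" "l \<le> d" "W = E l" by auto
    then show "W \<subseteq> tail (i - 1)" using E_subset_tail[of "i - 1" l] by simp
  qed
  ultimately show ?thesis by blast
qed

lemma A_flag:
  assumes "k \<le> d" "x \<in> flag k"
  shows "A *\<^sub>v x \<in> flag (Suc k)"
proof (rule ssum_mult_vec_into[OF A_carrier subspace_flag _ assms(2)[unfolded flag_def]])
  fix W assume "W \<in> set (map Es [0..<k])"
  then obtain i where i: "i < k" "W = Es i" by auto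
  then have "A *\<^sub>v w \<in> flag (Suc k)" if "w \<in> W" for w
    using A_Es_flag[of i w] flag_mono[of "Suc (Suc i)" "Suc k"] assms(1) that by auto
  then show "W \<subseteq> carrier_vec n \<and> (\<forall>w\<in>W. A *\<^sub>v w \<in> flag (Suc k))"
    using i subspace_vec_carrier[OF subspace_Es] by auto
qed

lemma As_tail:
  assumes "x \<in> tail (Suc j)"
  shows "As *\<^sub>v x \<in> tail j"
proof (rule ssum_mult_vec_into[OF As_carrier subspace_tail _ assms[unfolded tail_def]])
  fix W assume "W \<in> set (map E [Suc j..<Suc d])"
  then obtain i where i: "Suc j \<le> i" "i \<le> d" "W = E i" by auto
  then have "As *\<^sub>v w \<in> tail j" if "w \<in> W" for w
    using As_E_tail[of i w] tail_antimono[of j "i - 1"] that by (simp add: subset_iff)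
  then show "W \<subseteq> carrier_vec n \<and> (\<forall>w\<in>W. As *\<^sub>v w \<in> tail j)"
    using i subspace_vec_carrier[OF subspace_E] by auto
qed

lemma A_shift_tail:
  assumes "x \<in> tail j"
  shows "char_matrix A (th j) *\<^sub>v x \<in> tail (Suc j)"
proof (rule char_matrix_ssum_eigenspaces[OF A_carrier subspace_tail, where f = th])
  show "x \<in> ssum n (map (\<lambda>i. eigenspace n A (th i)) [j..<Suc d])"
    using assms by (simp add: tail_def E_def[abs_def])
  fix i assume "i \<in> set [j..<Suc d]" "i \<noteq> j"
  then show "eigenspace n A (th i) \<subseteq> tail (Suc j)"
    using E_subset_tail[of "Suc j" i] by (simp add: E_def)
qed

lemma As_shift_flag:
  assumes "x \<in> flag (Suc k)"
  shows "char_matrix As (ths k) *\<^sub>v x \<in> flag k"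
proof (rule char_matrix_ssum_eigenspaces[OF As_carrier subspace_flag, where f = ths])
  show "x \<in> ssum n (map (\<lambda>i. eigenspace n As (ths i)) [0..<Suc k])"
    using assms by (simp add: flag_def Es_def[abs_def])
  fix i assume "i \<in> set [0..<Suc k]" "i \<noteq> k"
  then show "eigenspace n As (ths i) \<subseteq> flag k"
    using Es_subset_flag[of i k] by (simp add: Es_def)
qed

lemma A_step:
  assumes "k \<le> d" "x \<in> flag k \<inter> tail j"
  shows "char_matrix A (th j) *\<^sub>v x \<in> flag (Suc k) \<inter> tail (Suc j)"
proof -
  have "x \<in> flag (Suc k)" using assms flag_mono[of k "Suc k"] by auto
  then have "A *\<^sub>v x - th j \<cdot>\<^sub>v x \<in> flag (Suc k)"
    using A_flag assms
      by (auto intro!: subspace_vec_minus[OF subspace_flag] subspace_vec_smult[OF subspace_flag])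
  moreover have "char_matrix A (th j) *\<^sub>v x = A *\<^sub>v x - th j \<cdot>\<^sub>v x"
    using assms flag_carrier by (blast intro: char_matrix_mult_vec[OF A_carrier])
  ultimately show ?thesis using A_shift_tail[of x j] assms by auto
qed

lemma As_step:
  assumes "x \<in> flag (Suc k) \<inter> tail (Suc j)"
  shows "char_matrix As (ths k) *\<^sub>v x \<in> flag k \<inter> tail j"
proof -
  have "x \<in> tail j" using assms tail_antimono[of j "Suc j"] by auto
  then have "As *\<^sub>v x - ths k \<cdot>\<^sub>v x \<in> tail j"
    using As_tail assms
      by (auto intro!: subspace_vec_minus[OF subspace_tail] subspace_vec_smult[OF subspace_tail])
  moreover have "char_matrix As (ths k) *\<^sub>v x = As *\<^sub>v x - ths k \<cdot>\<^sub>v x"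
    using assms flag_carrier by (blast intro: char_matrix_mult_vec[OF As_carrier])
  ultimately show ?thesis using As_shift_flag[of x k] assms by auto
qed

lemma tail_1_neq_carrier: "tail 1 \<noteq> carrier_vec n"
proof
  assume full: "tail 1 = carrier_vec n"
  have "th 0 \<in> eigenvalues_of A" using tridiagonal by (auto simp: tridiagonal_system_def)
  then obtain v where v: "v \<in> E 0" "v \<noteq> 0\<^sub>v n"
    by (auto simp: eigenvalues_of_def eigenvalue_def eigenvector_def E_def eigenspace_def
        carrier_matD[OF A_carrier])
  have "{1..<Suc d} \<subseteq> {..<Suc d}" by auto
  then have "th 0 \<notin> th ` set [1..<Suc d]" using inj_on_image_mem_iff[OF inj_th, of 0 "{1..<Suc d}"]
    by auto
  then have "prim_idem A (th 0) *\<^sub>v v = 0\<^sub>v n"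
    using prim_idem_ssum_eigenspaces_zero[OF A_carrier, of "th 0" th "[1..<Suc d]" v] full v
      subspace_vec_carrier[OF subspace_E]
    by (auto simp: tail_def E_def[abs_def])
  moreover have "prim_idem A (th 0) *\<^sub>v v = v"
    using prim_idem_eigenspace[OF A_carrier] v by (simp add: E_def)
  ultimately show False using v by simp
qed

lemma ssum_irreducible:
  assumes sub: "\<And>W. W \<in> set Ws \<Longrightarrow> subspace_vec n W"
    and shift: "\<And>W w. W \<in> set Ws \<Longrightarrow> w \<in> W \<Longrightarrow> w \<noteq> 0\<^sub>v n \<Longrightarrow>
      (\<exists>c. char_matrix A c *\<^sub>v w \<in> ssum n Ws) \<and> (\<exists>c. char_matrix As c *\<^sub>v w \<in> ssum n Ws)"
  shows "ssum n Ws = {0\<^sub>v n} \<or> ssum n Ws = carrier_vec n"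
  using irreducible[OF subspace_vec_ssum[OF sub]] shift
    ssum_invariant[OF A_carrier sub] ssum_invariant[OF As_carrier sub] by blast

lemma flag_Int_tail:
  assumes "k \<le> Suc d"
  shows "flag k \<inter> tail k = {0\<^sub>v n}"
proof -
  let ?Ws = "map (\<lambda>k. flag k \<inter> tail k) [0..<Suc (Suc d)]"
  have sub: "\<And>W. W \<in> set ?Ws \<Longrightarrow> subspace_vec n W"
    by (auto intro: subspace_vec_Int subspace_flag subspace_tail)
  have member: "flag k \<inter> tail k \<subseteq> ssum n ?Ws" if "k \<le> Suc d" for k
    by (rule ssum_upper[OF sub]) (use that in auto)
  have "ssum n ?Ws = {0\<^sub>v n} \<or> ssum n ?Ws = carrier_vec n"
  proof (rule ssum_irreducible[OF sub])
    fix W w assume "W \<in> set ?Ws" "w \<in> W" "w \<noteq> 0\<^sub>v n"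
    then obtain k where k: "k \<le> Suc d" "w \<in> flag k \<inter> tail k" by (auto simp: less_Suc_eq_le)
    with \<open>w \<noteq> 0\<^sub>v n\<close> obtain k' where k': "k = Suc k'" "k \<le> d"
      using flag_0 tail_Suc_d by (cases k) (auto simp: le_Suc_eq)
    show "(\<exists>c. char_matrix A c *\<^sub>v w \<in> ssum n ?Ws) \<and> (\<exists>c. char_matrix As c *\<^sub>v w \<in> ssum n ?Ws)"
      using A_step[OF k'(2) k(2)] As_step[of w k' k'] k k' member[of "Suc k"] member[of k'] by auto
  qed
  moreover have "ssum n ?Ws \<subseteq> tail 1"
  proof (rule ssum_least[OF subspace_tail])
    fix W assume "W \<in> set ?Ws"
    then obtain k where "W = flag k \<inter> tail k" by auto
    then show "W \<subseteq> tail 1"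
      using flag_0 tail_antimono[of 1 k] subspace_vec_zero[OF subspace_tail] by (cases k) auto
  qed
  ultimately have "ssum n ?Ws = {0\<^sub>v n}"
    using tail_1_neq_carrier subspace_vec_carrier[OF subspace_tail] by blast
  then show ?thesis
    using member[OF assms] subspace_vec_zero[OF subspace_flag] subspace_vec_zero[OF subspace_tail]
      by auto
qed

lemma ssum_U: "ssum n (map U [0..<Suc d]) = carrier_vec n"
proof -
  have sub: "\<And>W. W \<in> set (map U [0..<Suc d]) \<Longrightarrow> subspace_vec n W" using subspace_U by auto
  have member: "U k \<subseteq> ssum n (map U [0..<Suc d])" if "k \<le> d" for k
    by (rule ssum_upper[OF sub]) (use that in auto)
  have zero: "0\<^sub>v n \<in> ssum n (map U [0..<Suc d])"
    by (rule subspace_vec_zero[OF subspace_vec_ssum[OF sub]])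
  have "ssum n (map U [0..<Suc d]) = {0\<^sub>v n} \<or> ssum n (map U [0..<Suc d]) = carrier_vec n"
  proof (rule ssum_irreducible[OF sub])
    fix W w assume "W \<in> set (map U [0..<Suc d])" "w \<in> W"
    then obtain k where k: "k \<le> d" "w \<in> flag (Suc k) \<inter> tail k" by (auto simp: U_def less_Suc_eq_le)
    have "\<exists>c. char_matrix A c *\<^sub>v w \<in> ssum n (map U [0..<Suc d])"
    proof (cases "k < d")
      case True
      then show ?thesis using A_step[of "Suc k" w k] k member[of "Suc k"] by (auto simp: U_def)
    next
      case False
      then show ?thesis using A_shift_tail[of w k] k tail_Suc_d zero
        by (intro exI[of _ "th k"]) auto
    qed
    moreover have "\<exists>c. char_matrix As c *\<^sub>v w \<in> ssum n (map U [0..<Suc d])"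
    proof (cases k)
      case 0
      then show ?thesis using As_shift_flag[of w 0] k flag_0 zero by (intro exI[of _ "ths 0"]) auto
    next
      case (Suc k')
      then show ?thesis
        using As_step[of w "Suc k'" k'] k member[of k']
          by (intro exI[of _ "ths (Suc k')"]) (auto simp: U_def)
    qed
    ultimately show "(\<exists>c. char_matrix A c *\<^sub>v w \<in> ssum n (map U [0..<Suc d])) \<and>
        (\<exists>c. char_matrix As c *\<^sub>v w \<in> ssum n (map U [0..<Suc d]))" ..
  qed
  moreover obtain v where "v \<in> Es 0" "v \<noteq> 0\<^sub>v n"
  proof -
    have "ths 0 \<in> eigenvalues_of As" using tridiagonal by (auto simp: tridiagonal_system_def)
    then show ?thesis
      using that
        by (auto simp: eigenvalues_of_def eigenvalue_def eigenvector_def Es_def eigenspace_def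
          carrier_matD[OF As_carrier])
  qed
  moreover have "Es 0 \<subseteq> U 0" using flag_1 tail_0 subspace_vec_carrier[OF subspace_Es]
    by (auto simp: U_def)
  ultimately show ?thesis using member[of 0] by blast
qed

lemma ssum_U_subset_flag: "ssum n (map U [0..<k]) \<subseteq> flag k"
proof (rule ssum_least[OF subspace_flag])
  fix W assume "W \<in> set (map U [0..<k])"
  then obtain i where "i < k" "W = U i" by auto
  then show "W \<subseteq> flag k" using flag_mono[of "Suc i" k] by (auto simp: U_def)
qed

lemma ssum_U_subset_tail: "ssum n (map U [j..<Suc d]) \<subseteq> tail j"
proof (rule ssum_least[OF subspace_tail])
  fix W assume "W \<in> set (map U [j..<Suc d])"
  then obtain i where "j \<le> i" "W = U i" by auto
  then show "W \<subseteq> tail j" using tail_antimono[of j i] by (auto simp: U_def)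
qed

lemma flag_Suc_decompose:
  assumes k: "k \<le> d" and v: "v \<in> flag (Suc k)"
  obtains u f where "u \<in> U k" "f \<in> flag k" "v = u + f"
proof -
  have car: "\<And>i. U i \<subseteq> carrier_vec n" using subspace_U subspace_vec_carrier by auto
  have "[0..<Suc d] = [0..<Suc k] @ [Suc k..<Suc d]"
    using k upt_add_eq_append[of 0 "Suc k" "d - k"] by simp
  then have "v \<in> ssum n (map U [0..<Suc k] @ map U [Suc k..<Suc d])"
    using v ssum_U flag_carrier by auto
  then obtain a b where ab: "v = a + b" "a \<in> ssum n (map U [0..<Suc k])"
    "b \<in> ssum n (map U [Suc k..<Suc d])"
    using car by (subst (asm) ssum_append) auto
  have a_flag: "a \<in> flag (Suc k)" and b_tail: "b \<in> tail (Suc k)"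
    using ab ssum_U_subset_flag ssum_U_subset_tail by blast+
  have "b = v - a" using ab(1) flag_carrier[OF a_flag] tail_carrier[OF b_tail]
    by (auto intro!: eq_vecI)
  then have "b \<in> flag (Suc k)" using subspace_vec_minus[OF subspace_flag v a_flag] by simp
  then have "b = 0\<^sub>v n" using flag_Int_tail[of "Suc k"] k b_tail by auto
  then have "v = a" using ab(1) flag_carrier[OF a_flag] by simp
  moreover have "a \<in> ssum n (map U [0..<k] @ [U k])" using ab(2) by (simp add: upt_Suc)
  then obtain f u where "a = f + u" "f \<in> ssum n (map U [0..<k])" "u \<in> ssum n [U k]"
    using car by (subst (asm) ssum_append) auto
  moreover have "ssum n [U k] = U k" using car by (intro ssum_single)
  ultimately show ?thesis using that ssum_U_subset_flag flag_carrier car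
    by (metis comm_add_vec subsetD)
qed

lemma triangular_flag_combination:
  assumes K: "K \<in> carrier_mat n n" and KU: "\<And>i u. i \<le> d \<Longrightarrow> u \<in> U i \<Longrightarrow> K *\<^sub>v u = ths i \<cdot>\<^sub>v u"
  shows "triangular_flag n (t \<cdot>\<^sub>m As + (1 - t) \<cdot>\<^sub>m K) ths flag (Suc d)"
proof -
  define B where "B = t \<cdot>\<^sub>m As + (1 - t) \<cdot>\<^sub>m K"
  have B: "B \<in> carrier_mat n n" using As_carrier K by (simp add: B_def)
  have "char_matrix B (ths k) *\<^sub>v x \<in> flag k" if "k \<le> d" "x \<in> flag (Suc k)" for k x
    using that
  proof (induction k arbitrary: x rule: less_induct)
    case (less k)
    have B_flag: "B *\<^sub>v f \<in> flag k" if f: "f \<in> flag k" for f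
    proof (cases k)
      case 0
      then show ?thesis using f flag_0 mult_mat_vec_zero[OF B] by simp
    next
      case (Suc k')
      have "char_matrix B (ths k') *\<^sub>v f \<in> flag k"
        using less.IH[of k' f] less.prems f Suc flag_mono[of k' k] by auto
      moreover have "B *\<^sub>v f = char_matrix B (ths k') *\<^sub>v f + ths k' \<cdot>\<^sub>v f"
        using B flag_carrier[OF f] by (auto intro!: eq_vecI simp: char_matrix_mult_vec)
      ultimately show ?thesis
        using f
          by (simp add: subspace_vec_add[OF subspace_flag] subspace_vec_smult[OF subspace_flag])
    qed
    obtain u f where uf: "u \<in> U k" "f \<in> flag k" "x = u + f"
      using flag_Suc_decompose less.prems by blast
    have c: "u \<in> carrier_vec n" "f \<in> carrier_vec n"
      using uf flag_carrier subspace_vec_carrier[OF subspace_U] by blast+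
    have "char_matrix B (ths k) *\<^sub>v u = t \<cdot>\<^sub>v (char_matrix As (ths k) *\<^sub>v u)"
      unfolding B_def using char_matrix_combination[OF As_carrier K c(1) KU] uf less.prems by simp
    then have "char_matrix B (ths k) *\<^sub>v u \<in> flag k"
      using As_shift_flag[of u k] uf
        by (auto simp: U_def intro: subspace_vec_smult[OF subspace_flag])
    moreover have "char_matrix B (ths k) *\<^sub>v f \<in> flag k"
      using B_flag[OF uf(2)] uf(2) B c
      by (auto simp: char_matrix_mult_vec
          intro!: subspace_vec_minus[OF subspace_flag] subspace_vec_smult[OF subspace_flag])
    ultimately show ?case
      using uf(3) B c
        by (simp add: mult_add_distrib_mat_vec[of _ n n] subspace_vec_add[OF subspace_flag])
  qed
  then show ?thesis
    unfolding B_def[symmetric] triangular_flag_def using flag_0 subspace_flag by auto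
qed

theorem split_comp_0_eq_image_prim_idem:
  assumes K: "K \<in> carrier_mat n n"
    and KU: "\<forall>i\<le>d. \<forall>u \<in> split_comp n d A th As ths i. K *\<^sub>v u = ths i \<cdot>\<^sub>v u"
  shows "split_comp n d A th As ths 0 = image_mat (prim_idem (t \<cdot>\<^sub>m As + (1 - t) \<cdot>\<^sub>m K) (ths 0))"
proof -
  define B where "B = t \<cdot>\<^sub>m As + (1 - t) \<cdot>\<^sub>m K"
  have B: "B \<in> carrier_mat n n" using As_carrier K by (simp add: B_def)
  have tri: "triangular_flag n B ths flag (Suc d)"
    unfolding B_def using triangular_flag_combination[OF K] KU by (simp add: split_comp_eq_U)
  have "carrier_vec n \<subseteq> ssum n (map (\<lambda>i. eigenspace n B (ths i)) [0..<Suc d])"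
    using triangular_flag_ssum_eigenspaces[OF B tri inj_ths] flag_Suc_d by simp
  then have "image_mat (prim_idem B (ths 0)) = eigenspace n B (ths 0)"
    by (rule image_prim_idem[OF B])
  also have "\<dots> = flag 1"
  proof
    show "eigenspace n B (ths 0) \<subseteq> flag 1"
      using triangular_flag_eigenspace_bottom[OF B tri inj_ths] flag_Suc_d
      by (auto simp: eigenspace_def)
    have "char_matrix B (ths 0) *\<^sub>v x = 0\<^sub>v n" if "x \<in> flag 1" for x
      using tri that flag_0 by (auto simp: triangular_flag_def)
    then show "flag 1 \<subseteq> eigenspace n B (ths 0)"
      using flag_carrier by (auto simp: eigenspace_iff_char_matrix[OF B])
  qed
  also have "\<dots> = split_comp n d A th As ths 0"
    using tail_0 flag_carrier by (auto simp: split_comp_eq_U U_def)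
  finally show ?thesis unfolding B_def by simp
qed

end

theorem lemma7p7:
  fixes A As K :: "'a::alg_closed_field mat" and q t :: 'a and n d :: nat
  assumes "n > 0" and "d \<ge> 1"
    and "q \<noteq> 0" and "\<forall>m::nat. m > 0 \<longrightarrow> q ^ m \<noteq> 1"
    and "tridiagonal_system n d A (\<lambda>i. q powi (2 * int i - int d))
                              As (\<lambda>i. q powi (int d - 2 * int i))"
    and "q_serre q A As"
    and "K \<in> carrier_mat n n"
    and "\<forall>i\<le>d. \<forall>u \<in> split_comp n d A (\<lambda>i. q powi (2 * int i - int d))
                                As (\<lambda>i. q powi (int d - 2 * int i)) i.
           K *\<^sub>v u = q powi (int d - 2 * int i) \<cdot>\<^sub>v u"
  shows "split_comp n d A (\<lambda>i. q powi (2 * int i - int d)) As (\<lambda>i. q powi (int d - 2 * int i)) 0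
         = image_mat (prim_idem (t \<cdot>\<^sub>m As + (1 - t) \<cdot>\<^sub>m K) (q powi int d))"
proof -
  interpret tridiagonal_setting n d A As
    "\<lambda>i. q powi (2 * int i - int d)" "\<lambda>i. q powi (int d - 2 * int i)"
    using assms(5) by unfold_locales
  show ?thesis using split_comp_0_eq_image_prim_idem[OF assms(7,8), of t] by simp
qed

end
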